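(* With respect to the operator norm induced by the entrywise $\ell_1$-norm $\|C\|=\sum_{x,y\in E}|C(x,y)|$ on $\mathsf M_E$, i.e. $|||S|||=\max\{\|S(C)\|:\|C\|=1\}$, we have (i) $|||L|||=1$ and (ii) $|||L-I|||\le 4/N$ (here $I$ denotes the identity operator on $\mathsf M_E$).
   Context: $E$ is a finite set with $N=\#E>8$ elements, listed in a fixed order; $\mathsf M_E$ is the space of complex $N\times N$ matrices indexed by $E\times E$. $|x\rangle$ (resp. $\langle x|$) is the column (resp. row) vector with 1 in coordinate $x$ and 0 elsewhere; $C^*$ denotes transpose. $Q$ is an irreducible stochastic matrix on $E$ with $Q(x,y)=Q(y,x)$ for all $x,y$ and $\mathrm{tr}(Q)=0$. Let $(U,V)$ be a random pair in $E\times E$ with $\mathbb P(U=x,V=y)=\frac1NQ(x,y)$ and $T=I-|U\rangle\langle U|+|U\rangle\langle V|$ ($I$ the identity matrix); the linear operator $L:\mathsf M_E\to\mathsf M_E$ is $L(C)=\mathbb E[T^*CT]$. *)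

theory Defs
  imports "HOL-Analysis.Analysis"
begin

text \<open>Basis column/row vectors: |x> as an E x 1 matrix and <x| as a 1 x E matrix,
  represented as square matrices via the outer product |x><y|.\<close>
definition ketbra :: "'e::finite \<Rightarrow> 'e \<Rightarrow> complex^'e^'e" where
  "ketbra x y = (\<chi> i j. if i = x \<and> j = y then 1 else 0)"

definition Tmat :: "'e::finite \<Rightarrow> 'e \<Rightarrow> complex^'e^'e" where
  "Tmat x y = mat 1 - ketbra x x + ketbra x y"

primrec matpow :: "real^'e::finite^'e \<Rightarrow> nat \<Rightarrow> real^'e^'e" where
  "matpow A 0 = mat 1"
| "matpow A (Suc n) = matpow A n ** A"

definition irreducible_mat :: "real^'e^'e \<Rightarrow> bool" where
  "irreducible_mat Q \<longleftrightarrow> (\<forall>x y. \<exists>n\<ge>1. (matpow Q n) $ x $ y > 0)"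

definition stochastic_mat :: "real^'e^'e \<Rightarrow> bool" where
  "stochastic_mat Q \<longleftrightarrow> (\<forall>x y. Q $ x $ y \<ge> 0) \<and> (\<forall>x. (\<Sum>y\<in>UNIV. Q $ x $ y) = 1)"

text \<open>L(C) = E[T^* C T] with P(U=x,V=y) = Q(x,y)/N, T = T_{UV}; C^* is the transpose.\<close>
definition Lop :: "real^'e::finite^'e \<Rightarrow> complex^'e^'e \<Rightarrow> complex^'e^'e" where
  "Lop Q C = (\<Sum>x\<in>UNIV. \<Sum>y\<in>UNIV.
      (Q $ x $ y / real CARD('e)) *\<^sub>R (transpose (Tmat x y) ** C ** Tmat x y))"

definition l1norm :: "complex^'e::finite^'e \<Rightarrow> real" where
  "l1norm C = (\<Sum>x\<in>UNIV. \<Sum>y\<in>UNIV. cmod (C $ x $ y))"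

definition opnorm1 :: "(complex^'e::finite^'e \<Rightarrow> complex^'e^'e) \<Rightarrow> real" where
  "opnorm1 S = Sup ((\<lambda>C. l1norm (S C)) ` {C. l1norm C = 1})"

end

theory Submission
  imports Defs
begin

(* For a map f on the index set E let F be its 0/1 matrix, F(a,i) = [f a = i].
   Then F^* C F is the push-forward of C along f x f: its (i,j) entry is the sum of C(a,b)
   over f a = i, f b = j.  The matrix T = I - |x><x| + |x><y| is exactly the matrix of the
   map "redirect x y" sending x to y and fixing every other point, so
       L(C) = sum_{x,y} (Q(x,y)/N) push_{redirect x y}(C)
   is a convex combination of push-forwards (only stochasticity of Q is used).
   (i)  A push-forward never increases the entrywise l1-norm, hence |||L||| <= 1; it
        preserves the sum of all entries, so L(|z><z|) has entry sum 1 and l1-norm >= 1.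
   (ii) push_{redirect x y}(C) - C only involves entries of C in row x or column x, so its
        l1-norm is at most twice their mass; averaging with weights Q(x,y)/N, whose row
        sums are 1/N, and noting that every entry lies in one row and one column, gives
        |||L - I||| <= 4/N. *)

lemma sum_fibres:
  fixes f :: "'a::finite \<Rightarrow> 'b::finite"
  shows "(\<Sum>i\<in>UNIV. \<Sum>a | f a = i. h a) = (\<Sum>a\<in>UNIV. h a)"
  using sum.group[of UNIV UNIV f h] by simp

lemma norm_double_sum_le:
  fixes g :: "'a \<Rightarrow> 'b \<Rightarrow> 'c::real_normed_vector"
  shows "norm (\<Sum>a\<in>A. \<Sum>b\<in>B a. g a b) \<le> (\<Sum>a\<in>A. \<Sum>b\<in>B a. norm (g a b))"
  by (rule order_trans[OF norm_sum sum_mono]) (rule norm_sum)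

lemma sum_if_pull: "(\<Sum>b\<in>B. if P then g b else 0) = (if P then \<Sum>b\<in>B. g b else 0)"
  by simp

lemma sum_delta_pair:
  "(\<Sum>i\<in>(UNIV::'a::finite set). \<Sum>j\<in>(UNIV::'b::finite set). if i = x \<and> j = y then c else 0) = c"
proof -
  have "(\<Sum>j\<in>UNIV. if i = x \<and> j = y then c else 0) = (if i = x then c else 0)" for i
    by (cases "i = x") simp_all
  then show ?thesis
    by simp
qed

lemma l1norm_add_le: "l1norm (A + B) \<le> l1norm A + l1norm B"
  unfolding l1norm_def by (simp flip: sum.distrib add: sum_mono norm_triangle_ineq)

lemma l1norm_diff_le: "l1norm (A - B) \<le> l1norm A + l1norm B"
  unfolding l1norm_def by (simp flip: sum.distrib add: sum_mono norm_triangle_ineq4)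

lemma l1norm_scaleR: "l1norm (r *\<^sub>R A) = \<bar>r\<bar> * l1norm A"
  unfolding l1norm_def by (simp add: sum_distrib_left)

lemma l1norm_sum_le: "l1norm (\<Sum>k\<in>K. A k) \<le> (\<Sum>k\<in>K. l1norm (A k))"
proof (induction K rule: infinite_finite_induct)
  case (insert k K)
  then show ?case
    using l1norm_add_le[of "A k" "\<Sum>k\<in>K. A k"] by simp
qed (simp_all add: l1norm_def)

lemma l1norm_convex_le:
  assumes "\<And>x y. 0 \<le> w x y"
  shows "l1norm (\<Sum>x\<in>X. \<Sum>y\<in>Y. w x y *\<^sub>R A x y) \<le> (\<Sum>x\<in>X. \<Sum>y\<in>Y. w x y * l1norm (A x y))"
proof -
  have "l1norm (\<Sum>x\<in>X. \<Sum>y\<in>Y. w x y *\<^sub>R A x y) \<le> (\<Sum>x\<in>X. \<Sum>y\<in>Y. l1norm (w x y *\<^sub>R A x y))"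
    by (rule order_trans[OF l1norm_sum_le sum_mono]) (rule l1norm_sum_le)
  then show ?thesis
    using assms by (simp add: l1norm_scaleR)
qed

text \<open>Matrix units have norm one; they witness that the operator norm is attained.\<close>
lemma l1norm_ketbra: "l1norm (ketbra x y) = 1"
  unfolding l1norm_def ketbra_def by (simp add: if_distrib[of cmod] sum_delta_pair cong: if_cong)

subsection \<open>Push-forward of a matrix along a map\<close>

definition push :: "('a::finite \<Rightarrow> 'b::finite) \<Rightarrow> complex^'a^'a \<Rightarrow> complex^'b^'b" where
  "push f C = (\<chi> i j. \<Sum>a | f a = i. \<Sum>b | f b = j. C $ a $ b)"

text \<open>Push-forwards are l1-contractions: each entry of C is moved, possibly merged, never copied.\<close>
lemma l1norm_push_le: "l1norm (push f C) \<le> l1norm C"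
proof -
  have "l1norm (push f C) \<le> (\<Sum>i\<in>UNIV. \<Sum>j\<in>UNIV. \<Sum>a | f a = i. \<Sum>b | f b = j. cmod (C $ a $ b))"
    unfolding l1norm_def push_def
    by (intro sum_mono) (simp, rule norm_double_sum_le)
  also have "\<dots> = (\<Sum>i\<in>UNIV. \<Sum>a | f a = i. \<Sum>j\<in>UNIV. \<Sum>b | f b = j. cmod (C $ a $ b))"
    by (intro sum.cong refl sum.swap)
  also have "\<dots> = l1norm C"
    by (simp add: sum_fibres l1norm_def)
  finally show ?thesis .
qed

lemma push_add: "push f (A + B) = push f A + push f B"
  by (simp add: push_def vec_eq_iff sum.distrib)

lemma push_fixed:
  assumes "\<And>a b. C $ a $ b \<noteq> 0 \<Longrightarrow> f a = a \<and> f b = b"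
  shows "push f C = C"
proof -
  have "(\<Sum>a | f a = i. \<Sum>b | f b = j. C $ a $ b) = C $ i $ j" for i j
  proof -
    have "(\<Sum>a | f a = i. \<Sum>b | f b = j. C $ a $ b)
        = (\<Sum>a | f a = i. \<Sum>b | f b = j. if a = i \<and> b = j then C $ a $ b else 0)"
      using assms by (intro sum.cong refl) fastforce
    also have "\<dots> = (\<Sum>a | f a = i. if a = i then \<Sum>b | f b = j. if b = j then C $ i $ j else 0 else 0)"
      by (intro sum.cong refl) (simp add: sum_if_pull)
    also have "\<dots> = C $ i $ j"
      using assms[of i j] by auto
    finally show ?thesis .
  qed
  then show ?thesis
    by (simp add: push_def vec_eq_iff)
qed

definition fun_mat :: "('a::finite \<Rightarrow> 'b::finite) \<Rightarrow> complex^'b^'a" where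
  "fun_mat f = (\<chi> a i. of_bool (f a = i))"

lemma conj_fun_mat: "transpose (fun_mat f) ** C ** fun_mat f = push f C"
proof -
  have "(transpose (fun_mat f) ** C ** fun_mat f) $ i $ j = push f C $ i $ j" for i j
  proof -
    have "(transpose (fun_mat f) ** C ** fun_mat f) $ i $ j
        = (\<Sum>b | f b = j. \<Sum>a | f a = i. C $ a $ b)"
      by (simp add: matrix_matrix_mult_def transpose_def fun_mat_def)
    also have "\<dots> = push f C $ i $ j"
      unfolding push_def by (simp add: sum.swap[of _ "{b. f b = j}"])
    finally show ?thesis .
  qed
  then show ?thesis
    by (simp add: vec_eq_iff)
qed

subsection \<open>How far a push-forward moves a matrix\<close>

definition mask :: "('a \<Rightarrow> 'a \<Rightarrow> bool) \<Rightarrow> complex^'a^'a \<Rightarrow> complex^'a^'a" where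
  "mask P C = (\<chi> a b. if P a b then C $ a $ b else 0)"

lemma mask_split: "C = mask P C + mask (\<lambda>a b. \<not> P a b) C"
  by (simp add: mask_def vec_eq_iff)

lemma l1norm_mask_mono:
  assumes "\<And>a b. P a b \<Longrightarrow> P' a b"
  shows "l1norm (mask P C) \<le> l1norm (mask P' C)"
  unfolding l1norm_def mask_def using assms by (intro sum_mono) auto

text \<open>Only entries with a coordinate moved by f contribute to push f C - C, and each of them
  at most twice (once where it is removed, once where it lands).\<close>
lemma l1norm_push_minus_id_le:
  fixes f :: "'a::finite \<Rightarrow> 'a"
  shows "l1norm (push f C - C) \<le> 2 * l1norm (mask (\<lambda>a b. f a \<noteq> a \<or> f b \<noteq> b) C)"
proof -
  define M where "M = mask (\<lambda>a b. f a \<noteq> a \<or> f b \<noteq> b) C"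
  define F where "F = mask (\<lambda>a b. \<not> (f a \<noteq> a \<or> f b \<noteq> b)) C"
  have "push f F = F"
    by (rule push_fixed) (auto simp: F_def mask_def split: if_splits)
  moreover have "C = M + F"
    unfolding M_def F_def by (rule mask_split)
  ultimately have "push f C - C = push f M - M"
    by (metis push_add add_diff_cancel_right)
  then have "l1norm (push f C - C) \<le> l1norm (push f M) + l1norm M"
    by (simp add: l1norm_diff_le)
  also have "\<dots> \<le> 2 * l1norm M"
    using l1norm_push_le[of f M] by simp
  finally show ?thesis
    unfolding M_def .
qed

definition row_col_mass :: "'a \<Rightarrow> complex^'a^'a \<Rightarrow> real" where
  "row_col_mass x C = (\<Sum>b\<in>UNIV. cmod (C $ x $ b)) + (\<Sum>a\<in>UNIV. cmod (C $ a $ x))"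

lemma l1norm_mask_cross_le: "l1norm (mask (\<lambda>a b. a = x \<or> b = x) C) \<le> row_col_mass x C"
proof -
  have "l1norm (mask (\<lambda>a b. a = x \<or> b = x) C)
      \<le> (\<Sum>a\<in>UNIV. \<Sum>b\<in>UNIV. (if a = x then cmod (C $ a $ b) else 0)
                              + (if b = x then cmod (C $ a $ b) else 0))"
    unfolding l1norm_def mask_def by (intro sum_mono) auto
  also have "\<dots> = row_col_mass x C"
    by (simp add: row_col_mass_def sum.distrib sum_if_pull
        sum.swap[of "\<lambda>a b. if b = x then _ a b else 0"])
  finally show ?thesis .
qed

text \<open>Every entry lies in exactly one row and one column.\<close>
lemma sum_row_col_mass: "(\<Sum>x\<in>UNIV. row_col_mass x C) = 2 * l1norm C"
  by (simp add: row_col_mass_def l1norm_def sum.distrib sum.swap[of "\<lambda>x a. cmod (C $ a $ x)"])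

definition redirect :: "'a \<Rightarrow> 'a \<Rightarrow> 'a \<Rightarrow> 'a" where
  "redirect x y a = (if a = x then y else a)"

lemma Tmat_fun_mat: "Tmat x y = fun_mat (redirect x y)"
  by (auto simp: Tmat_def ketbra_def fun_mat_def redirect_def mat_def vec_eq_iff)

lemma l1norm_push_redirect_minus_id_le:
  "l1norm (push (redirect x y) C - C) \<le> 2 * row_col_mass x C"
proof -
  have "l1norm (mask (\<lambda>a b. redirect x y a \<noteq> a \<or> redirect x y b \<noteq> b) C)
      \<le> l1norm (mask (\<lambda>a b. a = x \<or> b = x) C)"
    by (rule l1norm_mask_mono) (auto simp: redirect_def split: if_splits)
  then show ?thesis
    using l1norm_push_minus_id_le[of "redirect x y" C] l1norm_mask_cross_le[of x C] by linarith
qed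

definition entry_sum :: "complex^'a::finite^'a \<Rightarrow> complex" where
  "entry_sum C = (\<Sum>i\<in>UNIV. \<Sum>j\<in>UNIV. C $ i $ j)"

lemma norm_entry_sum_le: "cmod (entry_sum C) \<le> l1norm C"
  unfolding entry_sum_def l1norm_def by (rule norm_double_sum_le)

text \<open>Push-forwards preserve the entry sum; this gives the lower bound |||L||| \<ge> 1.\<close>
lemma entry_sum_push: "entry_sum (push f C) = entry_sum C"
proof -
  have "entry_sum (push f C) = (\<Sum>i\<in>UNIV. \<Sum>a | f a = i. \<Sum>j\<in>UNIV. \<Sum>b | f b = j. C $ a $ b)"
    unfolding entry_sum_def push_def by (simp add: sum.swap[of _ UNIV "{a. f a = _}"])
  also have "\<dots> = entry_sum C"
    by (simp add: sum_fibres entry_sum_def)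
  finally show ?thesis .
qed

lemma entry_sum_sum: "entry_sum (\<Sum>k\<in>K. A k) = (\<Sum>k\<in>K. entry_sum (A k))"
  unfolding entry_sum_def by (simp add: sum.swap[of _ K])

lemma entry_sum_scaleR: "entry_sum (r *\<^sub>R A) = of_real r * entry_sum A"
  unfolding entry_sum_def
  by (simp add: sum_distrib_left del: scaleR_conv_of_real) (simp add: scaleR_conv_of_real)

lemma entry_sum_ketbra: "entry_sum (ketbra x y) = 1"
  unfolding entry_sum_def ketbra_def by (simp add: sum_delta_pair)

subsection \<open>The operator L as an average of push-forwards\<close>

definition jump_prob :: "real^'e::finite^'e \<Rightarrow> 'e \<Rightarrow> 'e \<Rightarrow> real" where
  "jump_prob Q x y = Q $ x $ y / real CARD('e)"

lemma jump_prob_nonneg: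
  fixes Q :: "real^'e::finite^'e"
  assumes "stochastic_mat Q"
  shows "0 \<le> jump_prob Q x y"
  using assms by (simp add: stochastic_mat_def jump_prob_def)

lemma jump_prob_row_sum:
  fixes Q :: "real^'e::finite^'e"
  assumes "stochastic_mat Q"
  shows "(\<Sum>y\<in>UNIV. jump_prob Q x y) = 1 / real CARD('e)"
  using assms by (simp add: stochastic_mat_def jump_prob_def flip: sum_divide_distrib)

lemma jump_prob_sum:
  fixes Q :: "real^'e::finite^'e"
  assumes "stochastic_mat Q"
  shows "(\<Sum>x\<in>UNIV. \<Sum>y\<in>UNIV. jump_prob Q x y) = 1"
  by (simp add: jump_prob_row_sum[OF assms])

lemma Lop_push: "Lop Q C = (\<Sum>x\<in>UNIV. \<Sum>y\<in>UNIV. jump_prob Q x y *\<^sub>R push (redirect x y) C)"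
  unfolding Lop_def jump_prob_def by (simp add: Tmat_fun_mat conj_fun_mat)

text \<open>Since the weights sum to one, L - I is the average of the differences push - id.\<close>
lemma Lop_minus_id:
  fixes Q :: "real^'e::finite^'e" and C :: "complex^'e^'e"
  assumes "stochastic_mat Q"
  shows "Lop Q C - C = (\<Sum>x\<in>UNIV. \<Sum>y\<in>UNIV. jump_prob Q x y *\<^sub>R (push (redirect x y) C - C))"
proof -
  have "C = (\<Sum>x\<in>UNIV. \<Sum>y\<in>UNIV. jump_prob Q x y) *\<^sub>R C"
    using jump_prob_sum[OF assms] by simp
  then show ?thesis
    by (simp add: Lop_push scaleR_diff_right sum_subtractf scaleR_sum_left)
qed

lemma l1norm_Lop_le:
  fixes Q :: "real^'e::finite^'e" and C :: "complex^'e^'e"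
  assumes "stochastic_mat Q"
  shows "l1norm (Lop Q C) \<le> l1norm C"
proof -
  have "l1norm (Lop Q C) \<le> (\<Sum>x\<in>UNIV. \<Sum>y\<in>UNIV. jump_prob Q x y * l1norm (push (redirect x y) C))"
    unfolding Lop_push by (rule l1norm_convex_le) (rule jump_prob_nonneg[OF assms])
  also have "\<dots> \<le> (\<Sum>x\<in>UNIV. \<Sum>y\<in>UNIV. jump_prob Q x y * l1norm C)"
    by (intro sum_mono mult_left_mono l1norm_push_le jump_prob_nonneg[OF assms])
  also have "\<dots> = l1norm C"
    by (simp flip: sum_distrib_right add: jump_prob_sum[OF assms])
  finally show ?thesis .
qed

lemma entry_sum_Lop:
  fixes Q :: "real^'e::finite^'e" and C :: "complex^'e^'e"
  assumes "stochastic_mat Q"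
  shows "entry_sum (Lop Q C) = entry_sum C"
proof -
  have "entry_sum (Lop Q C) = of_real (\<Sum>x\<in>UNIV. \<Sum>y\<in>UNIV. jump_prob Q x y) * entry_sum C"
    by (simp add: Lop_push entry_sum_sum entry_sum_scaleR entry_sum_push sum_distrib_right)
  then show ?thesis
    by (simp add: jump_prob_sum[OF assms])
qed

lemma l1norm_Lop_minus_id_le:
  fixes Q :: "real^'e::finite^'e" and C :: "complex^'e^'e"
  assumes "stochastic_mat Q"
  shows "l1norm (Lop Q C - C) \<le> 4 / real CARD('e) * l1norm C"
proof -
  have "l1norm (Lop Q C - C)
      \<le> (\<Sum>x\<in>UNIV. \<Sum>y\<in>UNIV. jump_prob Q x y * l1norm (push (redirect x y) C - C))"
    unfolding Lop_minus_id[OF assms] by (rule l1norm_convex_le) (rule jump_prob_nonneg[OF assms])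
  also have "\<dots> \<le> (\<Sum>x\<in>UNIV. \<Sum>y\<in>UNIV. jump_prob Q x y * (2 * row_col_mass x C))"
    by (intro sum_mono mult_left_mono l1norm_push_redirect_minus_id_le jump_prob_nonneg[OF assms])
  also have "\<dots> = 2 / real CARD('e) * (\<Sum>x\<in>UNIV. row_col_mass x C)"
    by (simp flip: sum_distrib_right add: jump_prob_row_sum[OF assms] sum_distrib_left)
  also have "\<dots> = 4 / real CARD('e) * l1norm C"
    by (simp add: sum_row_col_mass)
  finally show ?thesis .
qed

lemma l1norm_unit_le:
  assumes "\<And>C. l1norm (S C) \<le> c * l1norm C" and "l1norm C = 1"
  shows "l1norm (S C) \<le> c"
  using assms(1)[of C] assms(2) by simp

lemma opnorm1_le:
  fixes S :: "complex^'e::finite^'e \<Rightarrow> complex^'e^'e"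
  assumes "\<And>C. l1norm (S C) \<le> c * l1norm C"
  shows "opnorm1 S \<le> c"
  unfolding opnorm1_def
proof (rule cSup_least)
  show "(\<lambda>C. l1norm (S C)) ` {C. l1norm C = 1} \<noteq> {}"
    using l1norm_ketbra by blast
qed (auto intro: l1norm_unit_le[OF assms])

lemma opnorm1_ge:
  fixes S :: "complex^'e::finite^'e \<Rightarrow> complex^'e^'e"
  assumes "\<And>C. l1norm (S C) \<le> c * l1norm C" and "l1norm C0 = 1"
  shows "l1norm (S C0) \<le> opnorm1 S"
  unfolding opnorm1_def
proof (rule cSup_upper)
  show "l1norm (S C0) \<in> (\<lambda>C. l1norm (S C)) ` {C. l1norm C = 1}"
    using assms(2) by blast
  show "bdd_above ((\<lambda>C. l1norm (S C)) ` {C. l1norm C = 1})"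
    by (rule bdd_aboveI) (auto intro: l1norm_unit_le[OF assms(1)])
qed

theorem proposition2p3:
  fixes Q :: "real^'e::finite^'e"
  assumes "CARD('e) > 8"
    and "stochastic_mat Q"
    and "irreducible_mat Q"
    and "\<forall>x y. Q $ x $ y = Q $ y $ x"
    and "trace Q = 0"
  shows "opnorm1 (Lop Q) = 1 \<and> opnorm1 (\<lambda>C. Lop Q C - C) \<le> 4 / real CARD('e)"
proof
  let ?E = "ketbra z z :: complex^'e^'e"
  have contraction: "l1norm (Lop Q C) \<le> 1 * l1norm C" for C
    using l1norm_Lop_le[OF assms(2)] by simp
  have "1 = cmod (entry_sum (Lop Q ?E))"
    by (simp add: entry_sum_Lop[OF assms(2)] entry_sum_ketbra)
  also have "\<dots> \<le> l1norm (Lop Q ?E)"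
    by (rule norm_entry_sum_le)
  also have "\<dots> \<le> opnorm1 (Lop Q)"
    by (rule opnorm1_ge[OF contraction l1norm_ketbra])
  finally show "opnorm1 (Lop Q) = 1"
    using opnorm1_le[OF contraction] by linarith
  show "opnorm1 (\<lambda>C. Lop Q C - C) \<le> 4 / real CARD('e)"
    by (rule opnorm1_le) (rule l1norm_Lop_minus_id_le[OF assms(2)])
qed

end
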